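(* (1) For every $\gamma\in(0,1]$ there exists $c_*=c_*(\gamma)>0$ such that $\lambda_{n,\gamma}\ge c_*n^{2/(1+\gamma)}$ for all $n\in\mathbb{N}^*$. (2) For every $\gamma>0$ there exists $c^*=c^*(\gamma)>0$ such that $\lambda_{n,\gamma}\le c^*n^{2/(1+\gamma)}$ for all $n\in\mathbb{N}^*$.
   Context: For $n\in\mathbb{N}^*$ and $\gamma>0$, $\lambda_{n,\gamma}$ is the smallest eigenvalue of the operator $A_{n,\gamma}\varphi=-\varphi''+(n\pi)^2|x|^{2\gamma}\varphi$ with domain $H^2(-1,1)\cap H^1_0(-1,1)$, i.e. $\lambda_{n,\gamma}=\min\big\{\int_{-1}^1[v'^2+(n\pi)^2|x|^{2\gamma}v^2]dx/\int_{-1}^1v^2dx:\ v\in H^1_0(-1,1)\setminus\{0\}\big\}$. *)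

theory Defs
  imports "HOL-Analysis.Analysis"
begin

text \<open>H^1_0(-1,1) in one dimension: v (continuous representative) is the primitive
  v(x) = int_{-1}^x g of some g in L^2(-1,1) with int_{-1}^1 g = 0 (so v(-1)=v(1)=0);
  g is then the weak derivative v'.\<close>
definition H10_pair :: "(real \<Rightarrow> real) \<Rightarrow> (real \<Rightarrow> real) \<Rightarrow> bool" where
  "H10_pair v g \<longleftrightarrow>
     g \<in> borel_measurable lborel \<and>
     set_integrable lborel {-1..1} (\<lambda>x. (g x)\<^sup>2) \<and>
     (\<forall>x\<in>{-1..1}. v x = (LINT t:{-1..x}|lborel. g t)) \<and>
     (LINT t:{-1..1}|lborel. g t) = 0"

definition rayleigh :: "nat \<Rightarrow> real \<Rightarrow> (real \<Rightarrow> real) \<Rightarrow> (real \<Rightarrow> real) \<Rightarrow> real" where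
  "rayleigh n \<gamma> v g =
     (LINT x:{-1..1}|lborel. (g x)\<^sup>2 + (real n * pi)\<^sup>2 * \<bar>x\<bar> powr (2 * \<gamma>) * (v x)\<^sup>2)
     / (LINT x:{-1..1}|lborel. (v x)\<^sup>2)"

text \<open>Smallest eigenvalue lambda_{n,gamma}: the minimum (= infimum) of the Rayleigh quotient
  over nonzero v in H^1_0(-1,1).\<close>
definition lambda_ng :: "nat \<Rightarrow> real \<Rightarrow> real" where
  "lambda_ng n \<gamma> = Inf {rayleigh n \<gamma> v g | v g. H10_pair v g \<and> (\<exists>x\<in>{-1..1}. v x \<noteq> 0)}"

end

theory Submission
  imports Defs
begin

(*
  Both bounds come from the
  natural length scale e = n^(-1/(1+gamma)), at which the kinetic term 1/e^2 and the
  potential term (n pi)^2 e^(2 gamma) balance: both equal n^(2/(1+gamma)) up to pi^2.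

  Upper bound: the tent function of half-width e is an admissible test function, and
  its Rayleigh quotient is at most 8/e^2 + 8 (n pi)^2 e^(2 gamma).

  Lower bound: a weighted Poincare inequality at scale e.  An H^1_0 function is
  1/2-Hoelder, (v b - v a)^2 <= (b - a) int g^2 (Cauchy-Schwarz).  Away from [-e,e]
  the potential dominates v^2 / e^2; inside [-e,e] the mass of v^2 is controlled by
  the mass on [e,2e] plus e^2 int g^2 (Hoelder continuity).  Hence
  int v^2 <= 16 e^2 (int g^2 + int potential), i.e. every Rayleigh quotient is at
  least n^(2/(1+gamma)) / 16.  This holds for every gamma > 0.
*)

lemma set_integrable_continuous:
  fixes f :: "real \<Rightarrow> real"
  assumes "continuous_on {a..b} f"
  shows "set_integrable lborel {a..b} f"
  unfolding set_integrable_def by (rule borel_integrable_compact) (use assms in auto)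

(* Cauchy-Schwarz on an interval, proved from the nonnegativity of the variance
   int (g - t)^2 with t the mean value of g. *)
lemma interval_cauchy_schwarz:
  fixes g :: "real \<Rightarrow> real"
  assumes "a \<le> b" "g integrable_on {a..b}" "(\<lambda>x. (g x)\<^sup>2) integrable_on {a..b}"
  shows "(integral {a..b} g)\<^sup>2 \<le> (b - a) * integral {a..b} (\<lambda>x. (g x)\<^sup>2)"
proof (cases "a = b")
  case True
  then show ?thesis by simp
next
  case False
  with assms have L: "b - a > 0" by simp
  define I Q where "I = integral {a..b} g" and "Q = integral {a..b} (\<lambda>x. (g x)\<^sup>2)"
  define t where "t = I / (b - a)"
  have expand: "(\<lambda>x. (g x - t)\<^sup>2) = (\<lambda>x. ((g x)\<^sup>2 - (2 * t) * g x) + t\<^sup>2)"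
    by (auto simp: power2_eq_square algebra_simps)
  have lin: "((\<lambda>x. (g x)\<^sup>2 - (2 * t) * g x) has_integral Q - 2 * t * I) {a..b}"
    unfolding I_def Q_def using assms
    by (intro has_integral_diff has_integral_mult_right) (auto simp: integrable_integral)
  have "((\<lambda>x. (g x - t)\<^sup>2) has_integral (Q - 2 * t * I) + t\<^sup>2 * (b - a)) {a..b}"
    unfolding expand using has_integral_add[OF lin has_integral_const_real[of "t\<^sup>2" a b]] assms
    by (simp add: mult.commute)
  then have "0 \<le> Q - 2 * t * I + t\<^sup>2 * (b - a)"
    by (rule has_integral_nonneg) simp
  moreover have "t * (b - a) = I" using L by (simp add: t_def)
  then have "t\<^sup>2 * (b - a) = t * I" by (metis mult.assoc power2_eq_square)
  ultimately have "0 \<le> Q - t * I" by linarith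
  then have "0 \<le> (b - a) * (Q - t * I)" using L by simp
  also have "\<dots> = (b - a) * Q - I\<^sup>2"
    using \<open>t * (b - a) = I\<close> by (simp add: power2_eq_square algebra_simps)
  finally show ?thesis by (simp add: I_def Q_def)
qed

lemma integral_split_three:
  fixes f :: "real \<Rightarrow> real"
  assumes "f integrable_on {a..b}" "a \<le> c" "c \<le> d" "d \<le> b"
  shows "integral {a..b} f = integral {a..c} f + integral {c..d} f + integral {d..b} f"
proof -
  have "integral {a..c} f + integral {c..b} f = integral {a..b} f"
    by (rule Henstock_Kurzweil_Integration.integral_combine) (use assms in auto)
  moreover have "integral {c..d} f + integral {d..b} f = integral {c..b} f"
    by (rule Henstock_Kurzweil_Integration.integral_combine)
       (use assms in \<open>auto intro: integrable_on_subinterval\<close>)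
  ultimately show ?thesis by simp
qed

lemma integral_le_on_support:
  fixes f :: "real \<Rightarrow> real"
  assumes f: "f integrable_on {a..b}" and cd: "a \<le> c" "c \<le> d" "d \<le> b"
    and outside: "\<And>x. x \<in> {a..b} \<Longrightarrow> x \<le> c \<or> d \<le> x \<Longrightarrow> f x = 0"
    and bound: "\<And>x. x \<in> {c..d} \<Longrightarrow> f x \<le> C"
  shows "integral {a..b} f \<le> (d - c) * C"
proof -
  have "integral {a..c} f = 0" "integral {d..b} f = 0"
    by (subst integral_cong[of _ _ "\<lambda>_. 0"], use outside cd in auto)+
  moreover have "integral {c..d} f \<le> integral {c..d} (\<lambda>_. C)"
    by (rule integral_le) (use f cd bound in \<open>auto intro: integrable_on_subinterval\<close>)
  ultimately show ?thesis
    using integral_split_three[OF f cd] cd by simp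
qed

lemma integral_square_pos:
  fixes v :: "real \<Rightarrow> real"
  assumes "continuous_on {a..b} v" "a < b" "x \<in> {a..b}" "v x \<noteq> 0"
  shows "integral {a..b} (\<lambda>x. (v x)\<^sup>2) > 0"
proof -
  have "continuous_on {a..b} (\<lambda>x. (v x)\<^sup>2)"
    using assms by (intro continuous_intros)
  then have "integral {a..b} (\<lambda>x. (v x)\<^sup>2) \<noteq> 0"
    using integral_eq_0_iff[of a b "\<lambda>x. (v x)\<^sup>2"] assms by auto
  moreover have "integral {a..b} (\<lambda>x. (v x)\<^sup>2) \<ge> 0"
    using assms by (intro integral_nonneg integrable_continuous_interval continuous_intros) auto
  ultimately show ?thesis by simp
qed

lemma H10_pair_set_integrable:
  assumes "H10_pair v g"
  shows "set_integrable lborel {-1..1} g" "set_integrable lborel {-1..1} (\<lambda>x. (g x)\<^sup>2)"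
proof -
  show g2: "set_integrable lborel {-1..1} (\<lambda>x. (g x)\<^sup>2)"
    using assms unfolding H10_pair_def by auto
  have "\<bar>y\<bar> \<le> 1 + y\<^sup>2" for y :: real
    using zero_le_power2[of "\<bar>y\<bar> - 1"]
    by (simp add: power2_eq_square algebra_simps abs_mult_self_eq)
  moreover have "g \<in> borel_measurable lborel"
    using assms unfolding H10_pair_def by auto
  then have "set_borel_measurable lborel {-1..1} g"
    unfolding set_borel_measurable_def by measurable
  ultimately show "set_integrable lborel {-1..1} g"
    by (intro set_integrable_bound[OF set_integral_add(1)
          [OF set_integrable_continuous[of _ _ "\<lambda>_. 1"] g2]]) (auto intro!: AE_I2)
qed

lemma H10_pair_integrable_on:
  assumes "H10_pair v g"
  shows "g integrable_on {-1..1}" "(\<lambda>x. (g x)\<^sup>2) integrable_on {-1..1}"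
  using H10_pair_set_integrable[OF assms] set_borel_integral_eq_integral(1) by blast+

lemma H10_pair_primitive:
  assumes H: "H10_pair v g" and x: "x \<in> {-1..1}"
  shows "v x = integral {-1..x} g"
proof -
  have "set_integrable lborel {-1..x} g"
    by (rule set_integrable_subset[OF H10_pair_set_integrable(1)[OF H]]) (use x in auto)
  then show ?thesis
    using H x set_borel_integral_eq_integral(2) unfolding H10_pair_def by metis
qed

lemma H10_pair_continuous:
  assumes "H10_pair v g"
  shows "continuous_on {-1..1} v"
  using indefinite_integral_continuous_1[OF H10_pair_integrable_on(1)[OF assms]]
  by (rule continuous_on_eq) (use H10_pair_primitive[OF assms] in auto)

lemma H10_pair_left_zero:
  assumes "H10_pair v g"
  shows "v (-1) = 0"
  using H10_pair_primitive[OF assms, of "-1"] by simp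

lemma H10_pair_hoelder:
  assumes H: "H10_pair v g" and ab: "-1 \<le> a" "a \<le> b" "b \<le> 1"
  shows "(v b - v a)\<^sup>2 \<le> (b - a) * integral {-1..1} (\<lambda>x. (g x)\<^sup>2)"
proof -
  note gi = H10_pair_integrable_on[OF H]
  have gab: "g integrable_on {a..b}" "(\<lambda>x. (g x)\<^sup>2) integrable_on {a..b}"
    using gi ab by (auto intro: integrable_on_subinterval)
  have "integral {-1..a} g + integral {a..b} g = integral {-1..b} g"
    by (rule Henstock_Kurzweil_Integration.integral_combine)
       (use ab gi in \<open>auto intro: integrable_on_subinterval\<close>)
  then have "v b - v a = integral {a..b} g"
    using H10_pair_primitive[OF H, of a] H10_pair_primitive[OF H, of b] ab by auto
  then have "(v b - v a)\<^sup>2 \<le> (b - a) * integral {a..b} (\<lambda>x. (g x)\<^sup>2)"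
    using interval_cauchy_schwarz[OF ab(2) gab] by simp
  also have "\<dots> \<le> (b - a) * integral {-1..1} (\<lambda>x. (g x)\<^sup>2)"
    by (intro mult_left_mono integral_subset_le) (use ab gab gi in auto)
  finally show ?thesis .
qed

(* The potential term is continuous because gamma > 0 (note 0 powr 0 = 0 in HOL). *)
lemma potential_continuous:
  fixes v :: "real \<Rightarrow> real" and K \<gamma> :: real
  assumes "continuous_on S v" "\<gamma> > 0"
  shows "continuous_on S (\<lambda>x. K * \<bar>x\<bar> powr (2 * \<gamma>) * (v x)\<^sup>2)"
  by (intro continuous_intros continuous_on_powr' assms) (use assms in auto)

lemma rayleigh_eq_integrals:
  assumes H: "H10_pair v g" and \<gamma>: "\<gamma> > 0"
  shows "rayleigh n \<gamma> v g =
    (integral {-1..1} (\<lambda>x. (g x)\<^sup>2)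
       + integral {-1..1} (\<lambda>x. (real n * pi)\<^sup>2 * \<bar>x\<bar> powr (2 * \<gamma>) * (v x)\<^sup>2))
    / integral {-1..1} (\<lambda>x. (v x)\<^sup>2)"
proof -
  have vc: "continuous_on {-1..1} v" by (rule H10_pair_continuous[OF H])
  have g2: "set_integrable lborel {-1..1} (\<lambda>x. (g x)\<^sup>2)"
    by (rule H10_pair_set_integrable(2)[OF H])
  have w: "set_integrable lborel {-1..1} (\<lambda>x. (real n * pi)\<^sup>2 * \<bar>x\<bar> powr (2 * \<gamma>) * (v x)\<^sup>2)"
    by (intro set_integrable_continuous potential_continuous vc \<gamma>)
  have v2: "set_integrable lborel {-1..1} (\<lambda>x. (v x)\<^sup>2)"
    by (intro set_integrable_continuous continuous_intros vc)
  show ?thesis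
    unfolding rayleigh_def set_integral_add(2)[OF g2 w]
    by (simp only: set_borel_integral_eq_integral(2)[OF g2]
          set_borel_integral_eq_integral(2)[OF w] set_borel_integral_eq_integral(2)[OF v2])
qed

(* Rayleigh quotients are nonnegative, so the infimum defining lambda_ng exists. *)
lemma rayleigh_nonneg: "rayleigh n \<gamma> v g \<ge> 0"
  unfolding rayleigh_def set_lebesgue_integral_def
  by (intro divide_nonneg_nonneg Bochner_Integration.integral_nonneg) auto

section \<open>A weighted Poincare inequality\<close>

definition hoelder_half :: "(real \<Rightarrow> real) \<Rightarrow> real \<Rightarrow> bool" where
  "hoelder_half v A \<longleftrightarrow> continuous_on {-1..1} v \<and>
     (\<forall>a b. -1 \<le> a \<longrightarrow> a \<le> b \<longrightarrow> b \<le> 1 \<longrightarrow> (v b - v a)\<^sup>2 \<le> (b - a) * A)"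

lemma H10_pair_hoelder_half:
  assumes "H10_pair v g"
  shows "hoelder_half v (integral {-1..1} (\<lambda>x. (g x)\<^sup>2))"
  unfolding hoelder_half_def using H10_pair_continuous H10_pair_hoelder assms by blast

lemma hoelder_half_integrable:
  assumes "hoelder_half v A" "-1 \<le> a" "b \<le> 1"
  shows "(\<lambda>x. (v x)\<^sup>2) integrable_on {a..b}"
  using assms unfolding hoelder_half_def
  by (intro integrable_continuous_interval continuous_intros)
     (auto intro: continuous_on_subset)

lemma poincare_left_zero:
  assumes hv: "hoelder_half v A" and zero: "v (-1) = 0" and A: "A \<ge> 0"
  shows "integral {-1..1} (\<lambda>x. (v x)\<^sup>2) \<le> 4 * A"
proof -
  have "integral {-1..1} (\<lambda>x. (v x)\<^sup>2) \<le> integral {-1..1} (\<lambda>_::real. 2 * A)"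
  proof (rule integral_le)
    fix x :: real assume x: "x \<in> {-1..1}"
    have "(v x - v (-1))\<^sup>2 \<le> (x + 1) * A"
      using hv x unfolding hoelder_half_def by auto
    also have "\<dots> \<le> 2 * A" by (rule mult_right_mono) (use x A in auto)
    finally show "(v x)\<^sup>2 \<le> 2 * A" using zero by simp
  qed (use hoelder_half_integrable[OF hv] in auto)
  then show ?thesis by simp
qed

lemma mass_near_origin:
  assumes hv: "hoelder_half v A" and A: "A \<ge> 0" and e: "0 < e" "2 * e \<le> 1"
  shows "integral {-e..e} (\<lambda>x. (v x)\<^sup>2) \<le> 4 * integral {e..1} (\<lambda>x. (v x)\<^sup>2) + 12 * e\<^sup>2 * A"
proof -
  have v2c: "continuous_on {e..2*e} (\<lambda>x. (v x)\<^sup>2)"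
    using hv e unfolding hoelder_half_def by (auto intro!: continuous_intros intro: continuous_on_subset)
  obtain y where y: "y \<in> {e..2*e}" and ymin: "\<And>z. z \<in> {e..2*e} \<Longrightarrow> (v y)\<^sup>2 \<le> (v z)\<^sup>2"
    using continuous_attains_inf[OF _ _ v2c] e by auto
  have "e * (v y)\<^sup>2 = integral {e..2*e} (\<lambda>_. (v y)\<^sup>2)" using e by simp
  also have "\<dots> \<le> integral {e..2*e} (\<lambda>x. (v x)\<^sup>2)"
    by (rule integral_le) (use ymin hoelder_half_integrable[OF hv] e in auto)
  also have "\<dots> \<le> integral {e..1} (\<lambda>x. (v x)\<^sup>2)"
    by (rule integral_subset_le) (use hoelder_half_integrable[OF hv] e in auto)
  finally have right: "e * (v y)\<^sup>2 \<le> integral {e..1} (\<lambda>x. (v x)\<^sup>2)" .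
  have "integral {-e..e} (\<lambda>x. (v x)\<^sup>2) \<le> integral {-e..e} (\<lambda>_. 2 * (v y)\<^sup>2 + 6 * e * A)"
  proof (rule integral_le)
    fix x assume x: "x \<in> {-e..e}"
    have "(v y - v x)\<^sup>2 \<le> (y - x) * A"
      using hv x y e unfolding hoelder_half_def by auto
    also have "\<dots> \<le> (3 * e) * A" by (rule mult_right_mono) (use x y A in auto)
    finally have "(v y - v x)\<^sup>2 \<le> 3 * e * A" .
    moreover have "(v x)\<^sup>2 \<le> 2 * (v y)\<^sup>2 + 2 * (v y - v x)\<^sup>2"
      using zero_le_power2[of "2 * v y - v x"] by (simp add: power2_eq_square algebra_simps)
    ultimately show "(v x)\<^sup>2 \<le> 2 * (v y)\<^sup>2 + 6 * e * A" by simp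
  qed (use hoelder_half_integrable[OF hv] e in auto)
  also have "\<dots> = 4 * (e * (v y)\<^sup>2) + 12 * e\<^sup>2 * A"
    using e by (simp add: algebra_simps power2_eq_square)
  finally show ?thesis using right by linarith
qed

lemma mass_away_from_origin:
  fixes v :: "real \<Rightarrow> real" and \<gamma> K e :: real
  assumes vc: "continuous_on {-1..1} v" and \<gamma>: "\<gamma> > 0" and K: "K \<ge> 0"
    and e: "0 < e" "e \<le> 1" and weight: "1 / e\<^sup>2 \<le> K * e powr (2 * \<gamma>)"
  shows "integral {-1..-e} (\<lambda>x. (v x)\<^sup>2) + integral {e..1} (\<lambda>x. (v x)\<^sup>2)
           \<le> e\<^sup>2 * integral {-1..1} (\<lambda>x. K * \<bar>x\<bar> powr (2 * \<gamma>) * (v x)\<^sup>2)"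
proof -
  define w where "w x = K * \<bar>x\<bar> powr (2 * \<gamma>) * (v x)\<^sup>2" for x
  have integrable: "w integrable_on {a..b}" "(\<lambda>x. (v x)\<^sup>2) integrable_on {a..b}"
    if "-1 \<le> a" "b \<le> 1" for a b
  proof -
    have vab: "continuous_on {a..b} v" by (rule continuous_on_subset[OF vc]) (use that in auto)
    show "w integrable_on {a..b}"
      unfolding w_def by (intro integrable_continuous_interval potential_continuous vab \<gamma>)
    show "(\<lambda>x. (v x)\<^sup>2) integrable_on {a..b}"
      by (intro integrable_continuous_interval continuous_intros vab)
  qed
  have dominated: "(v x)\<^sup>2 \<le> e\<^sup>2 * w x" if "e \<le> \<bar>x\<bar>" for x
  proof -
    have "K * e powr (2 * \<gamma>) \<le> K * \<bar>x\<bar> powr (2 * \<gamma>)"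
      by (intro mult_left_mono powr_mono2 K) (use that \<gamma> e in auto)
    with weight have "1 / e\<^sup>2 \<le> K * \<bar>x\<bar> powr (2 * \<gamma>)" by linarith
    then have "(v x)\<^sup>2 / e\<^sup>2 \<le> w x"
      unfolding w_def using mult_right_mono[OF _ zero_le_power2[of "v x"]] by fastforce
    then show ?thesis using e by (simp add: field_simps)
  qed
  have "integral {-1..-e} (\<lambda>x. (v x)\<^sup>2) \<le> e\<^sup>2 * integral {-1..-e} w"
    "integral {e..1} (\<lambda>x. (v x)\<^sup>2) \<le> e\<^sup>2 * integral {e..1} w"
    using e by (subst integral_mult_right[symmetric], intro integral_le;
        auto intro: integrable dominated)+
  moreover have "integral {-e..e} w \<ge> 0"
    using e K by (intro integral_nonneg integrable) (auto simp: w_def)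
  then have "e\<^sup>2 * (integral {-1..-e} w + integral {e..1} w) \<le> e\<^sup>2 * integral {-1..1} w"
    using integral_split_three[of w "-1" 1 "-e" e] integrable e by (intro mult_left_mono) auto
  ultimately show ?thesis unfolding w_def by (simp add: algebra_simps)
qed

(* For e > 1/2
   the plain Poincare inequality suffices; otherwise split [-1,1] at -e and e. *)
lemma weighted_poincare:
  fixes v :: "real \<Rightarrow> real" and A \<gamma> K e :: real
  assumes hv: "hoelder_half v A" and zero: "v (-1) = 0" and A: "A \<ge> 0"
    and \<gamma>: "\<gamma> > 0" and K: "K \<ge> 0" and e: "e > 0"
    and weight: "1 / e\<^sup>2 \<le> K * e powr (2 * \<gamma>)"
  shows "integral {-1..1} (\<lambda>x. (v x)\<^sup>2)
           \<le> 16 * e\<^sup>2 * (A + integral {-1..1} (\<lambda>x. K * \<bar>x\<bar> powr (2 * \<gamma>) * (v x)\<^sup>2))"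
    (is "?D \<le> 16 * e\<^sup>2 * (A + ?W)")
proof -
  have vc: "continuous_on {-1..1} v" using hv unfolding hoelder_half_def by simp
  have W: "?W \<ge> 0"
    using K by (intro integral_nonneg integrable_continuous_interval potential_continuous vc \<gamma>) auto
  show ?thesis
  proof (cases "2 * e \<le> 1")
    case False
    then have "(1 / 2)\<^sup>2 \<le> e\<^sup>2" by (intro power_mono) auto
    then have "4 * A \<le> 16 * e\<^sup>2 * A"
      using mult_right_mono[OF _ A, of 4 "16 * e\<^sup>2"] by (simp add: power_divide)
    moreover have "16 * e\<^sup>2 * A \<le> 16 * e\<^sup>2 * (A + ?W)"
      using W by (intro mult_left_mono) auto
    ultimately show ?thesis using poincare_left_zero[OF hv zero A] by linarith
  next
    case True
    note v2I = hoelder_half_integrable[OF hv]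
    have "integral {-1..-e} (\<lambda>x. (v x)\<^sup>2) \<ge> 0"
      using True e by (intro integral_nonneg v2I) auto
    moreover have "?D = integral {-1..-e} (\<lambda>x. (v x)\<^sup>2) + integral {-e..e} (\<lambda>x. (v x)\<^sup>2)
        + integral {e..1} (\<lambda>x. (v x)\<^sup>2)"
      by (rule integral_split_three) (use v2I True e in auto)
    ultimately have "?D \<le> 5 * (integral {-1..-e} (\<lambda>x. (v x)\<^sup>2) + integral {e..1} (\<lambda>x. (v x)\<^sup>2))
        + 12 * e\<^sup>2 * A"
      using mass_near_origin[OF hv A e True] by (simp add: algebra_simps)
    also have "\<dots> \<le> 5 * (e\<^sup>2 * ?W) + 12 * e\<^sup>2 * A"
      using mass_away_from_origin[OF vc \<gamma> K e _ weight] True by simp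
    also have "\<dots> \<le> 16 * e\<^sup>2 * (A + ?W)"
    proof -
      have "0 \<le> e\<^sup>2 * ?W" "0 \<le> e\<^sup>2 * A" using W A by simp_all
      moreover have "16 * e\<^sup>2 * (A + ?W) = 16 * (e\<^sup>2 * A) + 16 * (e\<^sup>2 * ?W)"
        by (simp add: algebra_simps)
      ultimately show ?thesis by linarith
    qed
    finally show ?thesis .
  qed
qed

section \<open>The natural length scale\<close>

lemma length_scale:
  fixes n :: nat
  assumes n: "n \<ge> 1" and \<gamma>: "\<gamma> > 0"
  defines "e \<equiv> real n powr (-1 / (1 + \<gamma>))"
  shows "e > 0" "e \<le> 1" "1 / e\<^sup>2 = real n powr (2 / (1 + \<gamma>))"
    "(real n * pi)\<^sup>2 * e powr (2 * \<gamma>) = pi\<^sup>2 * real n powr (2 / (1 + \<gamma>))"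
proof -
  have n0: "real n > 0" using n by simp
  show "e > 0" unfolding e_def using n0 by simp
  have "real n powr (-1 / (1 + \<gamma>)) \<le> real n powr 0"
    by (rule powr_mono) (use n \<gamma> in auto)
  then show "e \<le> 1" unfolding e_def using n0 by simp
  have "e\<^sup>2 = real n powr (-2 / (1 + \<gamma>))"
    unfolding e_def power2_eq_square by (simp add: powr_add[symmetric])
  then show "1 / e\<^sup>2 = real n powr (2 / (1 + \<gamma>))"
    by (simp add: powr_minus_divide[symmetric])
  have "(real n)\<^sup>2 = real n powr 2" using n0 by (simp add: powr_numeral)
  then have "(real n)\<^sup>2 * e powr (2 * \<gamma>) = real n powr (2 + -1 / (1 + \<gamma>) * (2 * \<gamma>))"
    unfolding e_def by (simp only: powr_powr powr_add)
  also have "2 + -1 / (1 + \<gamma>) * (2 * \<gamma>) = 2 / (1 + \<gamma>)"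
    using \<gamma> by (simp add: field_simps)
  finally show "(real n * pi)\<^sup>2 * e powr (2 * \<gamma>) = pi\<^sup>2 * real n powr (2 / (1 + \<gamma>))"
    by (simp add: power_mult_distrib algebra_simps)
qed

section \<open>Lower bound\<close>

(* Every admissible Rayleigh quotient is at least n^(2/(1+gamma)) / 16: apply the weighted
   Poincare inequality at the natural length scale, where the weight is pi^2 / e^2. *)
lemma rayleigh_lower_bound:
  assumes H: "H10_pair v g" and x0: "x0 \<in> {-1..1}" "v x0 \<noteq> 0"
    and \<gamma>: "\<gamma> > 0" and n: "n \<ge> 1"
  shows "real n powr (2 / (1 + \<gamma>)) / 16 \<le> rayleigh n \<gamma> v g"
proof -
  define e where "e = real n powr (-1 / (1 + \<gamma>))"
  note scale = length_scale[OF n \<gamma>, folded e_def]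
  define A W D where "A = integral {-1..1} (\<lambda>x. (g x)\<^sup>2)"
    and "W = integral {-1..1} (\<lambda>x. (real n * pi)\<^sup>2 * \<bar>x\<bar> powr (2 * \<gamma>) * (v x)\<^sup>2)"
    and "D = integral {-1..1} (\<lambda>x. (v x)\<^sup>2)"
  have A: "A \<ge> 0"
    unfolding A_def by (rule integral_nonneg) (use H10_pair_integrable_on[OF H] in auto)
  have "1 * real n powr (2 / (1 + \<gamma>)) \<le> pi\<^sup>2 * real n powr (2 / (1 + \<gamma>))"
    using pi_gt3 by (intro mult_right_mono) (auto simp: one_le_power)
  then have weight: "1 / e\<^sup>2 \<le> (real n * pi)\<^sup>2 * e powr (2 * \<gamma>)"
    using scale by simp
  have "D \<le> 16 * e\<^sup>2 * (A + W)"
    using weighted_poincare[OF H10_pair_hoelder_half[OF H] H10_pair_left_zero[OF H]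
        A[unfolded A_def] \<gamma> zero_le_power2 scale(1) weight]
    unfolding A_def W_def D_def .
  moreover have "D > 0"
    unfolding D_def by (rule integral_square_pos[OF H10_pair_continuous[OF H] _ x0]) simp
  ultimately have "1 / (16 * e\<^sup>2) \<le> (A + W) / D"
    using scale(1) by (simp add: field_simps)
  also have "(A + W) / D = rayleigh n \<gamma> v g"
    unfolding A_def W_def D_def by (rule rayleigh_eq_integrals[OF H \<gamma>, symmetric])
  finally show ?thesis using scale(3) by simp
qed

section \<open>Upper bound: the tent test function\<close>

definition tent :: "real \<Rightarrow> real \<Rightarrow> real" where
  "tent e x = max 0 (1 - \<bar>x\<bar> / e)"

definition tent_slope :: "real \<Rightarrow> real \<Rightarrow> real" where
  "tent_slope e x = (indicator {-e<..<0} x - indicator {0<..<e} x) / e"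

lemma tent_continuous: "e \<noteq> 0 \<Longrightarrow> continuous_on S (tent e)"
  unfolding tent_def by (intro continuous_intros) auto

lemma tent_slope_measurable: "tent_slope e \<in> borel_measurable lborel"
  unfolding tent_slope_def by measurable

lemma tent_slope_square_le: "e > 0 \<Longrightarrow> (tent_slope e x)\<^sup>2 \<le> 1 / e\<^sup>2"
  by (auto simp: tent_slope_def indicator_def power_divide)

lemma tent_has_derivative:
  assumes e: "e > 0" and x: "x \<notin> {-e, 0, e}"
  shows "(tent e has_real_derivative tent_slope e x) (at x)"
proof -
  consider (left) "x < -e" | (up) "-e < x" "x < 0" | (down) "0 < x" "x < e" | (right) "e < x"
    using x by force
  then show ?thesis
  proof cases
    case left
    have "((\<lambda>_. 0) has_real_derivative tent_slope e x) (at x)"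
      using left e by (simp add: tent_slope_def)
    then show ?thesis
      by (rule has_field_derivative_transform_within_open[where S="{..<-e}"])
         (use left e in \<open>auto simp: tent_def field_simps\<close>)
  next
    case up
    have "((\<lambda>y. 1 + y / e) has_real_derivative tent_slope e x) (at x)"
      using up e by (auto simp: tent_slope_def intro!: derivative_eq_intros)
    then show ?thesis
      by (rule has_field_derivative_transform_within_open[where S="{-e<..<0}"])
         (use up e in \<open>auto simp: tent_def field_simps\<close>)
  next
    case down
    have "((\<lambda>y. 1 - y / e) has_real_derivative tent_slope e x) (at x)"
      using down e by (auto simp: tent_slope_def intro!: derivative_eq_intros)
    then show ?thesis
      by (rule has_field_derivative_transform_within_open[where S="{0<..<e}"])
         (use down e in \<open>auto simp: tent_def field_simps\<close>)
  next
    case right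
    have "((\<lambda>_. 0) has_real_derivative tent_slope e x) (at x)"
      using right e by (simp add: tent_slope_def)
    then show ?thesis
      by (rule has_field_derivative_transform_within_open[where S="{e<..}"])
         (use right e in \<open>auto simp: tent_def field_simps\<close>)
  qed
qed

lemma tent_H10_pair:
  assumes e: "0 < e" "e \<le> 1"
  shows "H10_pair (tent e) (tent_slope e)"
proof -
  have bounded: "set_integrable lborel {-1..b} f"
    if "f \<in> borel_measurable lborel" "\<And>x. \<bar>f x\<bar> \<le> C" for f :: "real \<Rightarrow> real" and b C
  proof (rule set_integrable_bound[OF set_integrable_continuous[of _ _ "\<lambda>_. C"]])
    show "set_borel_measurable lborel {-1..b} f"
      unfolding set_borel_measurable_def using that(1) by measurable
  qed (use that(2) in \<open>auto intro!: AE_I2 intro: order_trans[OF _ abs_ge_self]\<close>)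
  have slope_bound: "\<bar>tent_slope e x\<bar> \<le> 1 / e" for x
    using e by (auto simp: tent_slope_def indicator_def)
  have primitive: "(LINT t:{-1..b}|lborel. tent_slope e t) = tent e b" if b: "b \<in> {-1..1}" for b
  proof -
    have "(tent_slope e has_integral tent e b - tent e (-1)) {-1..b}"
      by (rule fundamental_theorem_of_calculus_interior_strong[where S="{-e,0,e}"])
         (use b e in \<open>auto simp: tent_continuous has_real_derivative_iff_has_vector_derivative[symmetric]
                 intro!: tent_has_derivative\<close>)
    moreover have "tent e (-1) = 0" using e by (auto simp: tent_def)
    ultimately show ?thesis
      using set_borel_integral_eq_integral(2)[OF bounded[OF tent_slope_measurable slope_bound]]
      by (simp add: integral_unique)
  qed
  have "set_integrable lborel {-1..1} (\<lambda>x. (tent_slope e x)\<^sup>2)"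
    using tent_slope_square_le[OF e(1)] tent_slope_measurable
    by (intro bounded[where C="1 / e\<^sup>2"]) auto
  moreover have "tent e 1 = 0" using e by (auto simp: tent_def)
  ultimately show ?thesis
    unfolding H10_pair_def using tent_slope_measurable primitive[of 1] primitive by auto
qed

(* The tent exceeds 1/2 on [-e/2, e/2], so its L^2 mass is at least e/4. *)
lemma tent_mass:
  assumes e: "0 < e" "e \<le> 1"
  shows "e / 4 \<le> integral {-1..1} (\<lambda>x. (tent e x)\<^sup>2)"
proof -
  have t2I: "(\<lambda>x. (tent e x)\<^sup>2) integrable_on {a..b}" for a b
    using e by (intro integrable_continuous_interval continuous_intros tent_continuous) auto
  have "integral {-e/2..e/2} (\<lambda>_. 1/4) \<le> integral {-e/2..e/2} (\<lambda>x. (tent e x)\<^sup>2)"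
  proof (rule integral_le)
    fix x assume "x \<in> {-e/2..e/2}"
    then have "1/2 \<le> tent e x" using e by (auto simp: tent_def field_simps)
    then have "(1/2)\<^sup>2 \<le> (tent e x)\<^sup>2" by (intro power_mono) auto
    then show "1/4 \<le> (tent e x)\<^sup>2" by (simp add: power2_eq_square)
  qed (use t2I in auto)
  also have "\<dots> \<le> integral {-1..1} (\<lambda>x. (tent e x)\<^sup>2)"
    by (rule integral_subset_le) (use e t2I in auto)
  finally show ?thesis using e by simp
qed

(* The Rayleigh quotient of the tent: kinetic energy at most 2/e, potential energy at
   most 2 e (n pi)^2 e^(2 gamma) (both integrands vanish off [-e,e]), mass at least e/4. *)
lemma tent_rayleigh:
  assumes e: "0 < e" "e \<le> 1" and \<gamma>: "\<gamma> > 0"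
  shows "rayleigh n \<gamma> (tent e) (tent_slope e) \<le> 8 / e\<^sup>2 + 8 * (real n * pi)\<^sup>2 * e powr (2 * \<gamma>)"
proof -
  define K where "K = (real n * pi)\<^sup>2"
  have K: "K \<ge> 0" unfolding K_def by simp
  note H = tent_H10_pair[OF e]
  have tent_range: "0 \<le> tent e x" "tent e x \<le> 1" for x
    using e by (auto simp: tent_def)
  have vanish: "tent e x = 0" "tent_slope e x = 0" if "e \<le> \<bar>x\<bar>" for x
    using that e by (auto simp: tent_def tent_slope_def indicator_def field_simps)
  have tc: "continuous_on {-1..1} (tent e)" using e by (simp add: tent_continuous)
  define A W D where "A = integral {-1..1} (\<lambda>x. (tent_slope e x)\<^sup>2)"
    and "W = integral {-1..1} (\<lambda>x. K * \<bar>x\<bar> powr (2 * \<gamma>) * (tent e x)\<^sup>2)"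
    and "D = integral {-1..1} (\<lambda>x. (tent e x)\<^sup>2)"
  have "A \<le> (e - -e) * (1 / e\<^sup>2)"
    unfolding A_def using H10_pair_integrable_on(2)[OF H] e
    by (intro integral_le_on_support) (auto intro: vanish tent_slope_square_le)
  then have A: "A \<le> 2 / e" using e by (simp add: power2_eq_square)
  have "W \<le> (e - -e) * (K * e powr (2 * \<gamma>))"
    unfolding W_def
  proof (rule integral_le_on_support)
    show "(\<lambda>x. K * \<bar>x\<bar> powr (2 * \<gamma>) * (tent e x)\<^sup>2) integrable_on {-1..1}"
      by (intro integrable_continuous_interval potential_continuous tc \<gamma>)
    fix x assume x: "x \<in> {-e..e}"
    have "\<bar>x\<bar> powr (2 * \<gamma>) * (tent e x)\<^sup>2 \<le> e powr (2 * \<gamma>) * 1"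
      using x \<gamma> tent_range[of x] by (intro mult_mono powr_mono2) (auto simp: power_le_one)
    then show "K * \<bar>x\<bar> powr (2 * \<gamma>) * (tent e x)\<^sup>2 \<le> K * e powr (2 * \<gamma>)"
      unfolding K_def by (simp add: mult.assoc mult_left_mono)
  qed (use e vanish in auto)
  then have W: "W \<le> 2 * e * (K * e powr (2 * \<gamma>))" by simp
  have D: "e / 4 \<le> D" unfolding D_def by (rule tent_mass[OF e])
  have "rayleigh n \<gamma> (tent e) (tent_slope e) = (A + W) / D"
    unfolding A_def W_def D_def K_def by (rule rayleigh_eq_integrals[OF H \<gamma>])
  also have "\<dots> \<le> (2 / e + 2 * e * (K * e powr (2 * \<gamma>))) / (e / 4)"
    using A W D e K H10_pair_integrable_on(2)[OF H]
    by (intro frac_le add_mono add_nonneg_nonneg) (auto simp: A_def intro!: integral_nonneg)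
  also have "\<dots> = 8 / e\<^sup>2 + 8 * K * e powr (2 * \<gamma>)"
    using e by (simp add: field_simps power2_eq_square)
  finally show ?thesis unfolding K_def .
qed

lemma lambda_ng_le_rayleigh:
  assumes "H10_pair v g" "x \<in> {-1..1}" "v x \<noteq> 0"
  shows "lambda_ng n \<gamma> \<le> rayleigh n \<gamma> v g"
  unfolding lambda_ng_def
  by (rule cInf_lower) (use assms in \<open>blast, auto intro!: bdd_belowI[of _ 0] rayleigh_nonneg\<close>)

lemma lambda_ng_ge:
  assumes "\<And>v g x. H10_pair v g \<Longrightarrow> x \<in> {-1..1} \<Longrightarrow> v x \<noteq> 0 \<Longrightarrow> L \<le> rayleigh n \<gamma> v g"
  shows "L \<le> lambda_ng n \<gamma>"
proof -
  have "H10_pair (tent 1) (tent_slope 1)" "tent 1 0 \<noteq> 0"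
    by (auto intro: tent_H10_pair simp: tent_def)
  then have "{rayleigh n \<gamma> v g | v g. H10_pair v g \<and> (\<exists>x\<in>{-1..1}. v x \<noteq> 0)} \<noteq> {}"
    by force
  then show ?thesis
    unfolding lambda_ng_def by (rule cInf_greatest) (use assms in auto)
qed

lemma lambda_ng_lower_bound:
  assumes "\<gamma> > 0" "n \<ge> 1"
  shows "1 / 16 * real n powr (2 / (1 + \<gamma>)) \<le> lambda_ng n \<gamma>"
  using rayleigh_lower_bound[OF _ _ _ assms] by (intro lambda_ng_ge) auto

lemma lambda_ng_upper_bound:
  assumes \<gamma>: "\<gamma> > 0" and n: "n \<ge> 1"
  shows "lambda_ng n \<gamma> \<le> (8 + 8 * pi\<^sup>2) * real n powr (2 / (1 + \<gamma>))"
proof -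
  define e where "e = real n powr (-1 / (1 + \<gamma>))"
  note scale = length_scale[OF n \<gamma>, folded e_def]
  have "tent e 0 \<noteq> 0" using scale by (simp add: tent_def)
  then have "lambda_ng n \<gamma> \<le> rayleigh n \<gamma> (tent e) (tent_slope e)"
    using tent_H10_pair[OF scale(1,2)] by (intro lambda_ng_le_rayleigh) auto
  also have "\<dots> \<le> 8 * (1 / e\<^sup>2) + 8 * ((real n * pi)\<^sup>2 * e powr (2 * \<gamma>))"
    using tent_rayleigh[OF scale(1,2) \<gamma>, of n] by (simp add: mult.assoc)
  also have "\<dots> = (8 + 8 * pi\<^sup>2) * real n powr (2 / (1 + \<gamma>))"
    unfolding scale(3,4) by (simp add: algebra_simps)
  finally show ?thesis .
qed

theorem proposition2p3:
  shows "(\<forall>\<gamma>::real. 0 < \<gamma> \<and> \<gamma> \<le> 1 \<longrightarrow>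
            (\<exists>c>0. \<forall>n::nat. n \<ge> 1 \<longrightarrow> lambda_ng n \<gamma> \<ge> c * real n powr (2 / (1 + \<gamma>))))
       \<and> (\<forall>\<gamma>::real. 0 < \<gamma> \<longrightarrow>
            (\<exists>c>0. \<forall>n::nat. n \<ge> 1 \<longrightarrow> lambda_ng n \<gamma> \<le> c * real n powr (2 / (1 + \<gamma>))))"
proof (intro conjI allI impI)
  fix \<gamma> :: real
  assume "0 < \<gamma> \<and> \<gamma> \<le> 1"
  then show "\<exists>c>0. \<forall>n::nat. n \<ge> 1 \<longrightarrow> lambda_ng n \<gamma> \<ge> c * real n powr (2 / (1 + \<gamma>))"
    using lambda_ng_lower_bound by (intro exI[of _ "1 / 16"]) auto
next
  fix \<gamma> :: real
  assume "0 < \<gamma>"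
  moreover have "0 < 8 + 8 * pi\<^sup>2" by (simp add: add_pos_nonneg)
  ultimately show "\<exists>c>0. \<forall>n::nat. n \<ge> 1 \<longrightarrow> lambda_ng n \<gamma> \<le> c * real n powr (2 / (1 + \<gamma>))"
    using lambda_ng_upper_bound by blast
qed

end
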